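(* An $Ł_n$-valued effectivity function $E:\mathcal P N\times Ł_n^S\to Ł_n$ is truly playable if and only if there is a game form $G=(N,\{\Sigma_i\mid i\in N\},S,o)$ such that $E=E_G$.
   Context: For a positive integer $n$ let $Ł_n=\{0,\frac1n,\dots,1\}$ with $\neg x=1-x$, $x\oplus y=\min(x+y,1)$, $x\odot y=\max(x+y-1,0)$, $\wedge=\min$, $\vee=\max$, applied pointwise on $Ł_n^S$; $0,1$ also denote constant functions. Standing assumptions: $N$ finite set of players, $S$ (possibly infinite) set of outcomes, $|N|\ge2$, $|S|\ge2$; coalitions $C\subseteq N$, $\overline C=N\setminus C$. A game form is $G=(N,\{\Sigma_i\mid i\in N\},S,o)$ with nonempty strategy sets $\Sigma_i$ and $o:\prod_{i\in N}\Sigma_i\to S$; $E_G(C,f)=\max_{\sigma_C}\min_{\sigma_{\overline C}} f(o(\sigma_C\sigma_{\overline C}))$, where $\sigma_C$, $\sigma_{\overline C}$ range over joint strategies of $C$ and $\overline C$ and $\sigma_C\sigma_{\overline C}$ is the combined profile. An $Ł_n$-valued effectivity function is any map $E:\mathcal P N\times Ł_n^S\to Ł_n$. It is: outcome monotonic if $f\ge g$ implies $E(C,f)\ge E(C,g)$; $N$-maximal if $\neg E(\varnothing,\neg f)\le E(N,f)$; superadditive if $E(C_1,f)\wedge E(C_2,g)\le E(C_1\cup C_2,f\wedge g)$ whenever $C_1\cap C_2=\varnothing$; homogeneous if $E(C,f\oplus f)=E(C,f)\oplus E(C,f)$ and $E(C,f\odot f)=E(C,f)\odot E(C,f)$; has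 liveness if $E(C,1)=1$ for all $C$; has safety if $E(C,0)=0$ for all $C$; principal if there is $g$ with $\{f\mid E(\varnothing,f)=1\}=\{f\mid f\ge g\odot\cdots\odot g\ (n\text{ factors})\}$. Playable: outcome monotonic, $N$-maximal, superadditive, homogeneous, liveness and safety; truly playable: playable and principal. *)

theory Defs
  imports Complex_Main "HOL-Library.FuncSet"
begin

definition Ln :: "nat \<Rightarrow> real set" where
  "Ln n = {real k / real n | k. k \<le> n}"

definition lneg :: "real \<Rightarrow> real" where "lneg x = 1 - x"
definition loplus :: "real \<Rightarrow> real \<Rightarrow> real" where "loplus x y = min (x + y) 1"
definition lodot :: "real \<Rightarrow> real \<Rightarrow> real" where "lodot x y = max (x + y - 1) 0"

fun lodot_pow :: "nat \<Rightarrow> real \<Rightarrow> real" where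
  "lodot_pow 0 x = 1"
| "lodot_pow (Suc k) x = lodot x (lodot_pow k x)"

text \<open>L_n-valued functions on the outcome set S (= the type 's).\<close>
definition Lfun :: "nat \<Rightarrow> ('s \<Rightarrow> real) set" where
  "Lfun n = {f. \<forall>s. f s \<in> Ln n}"

type_synonym ('p, 's) eff = "'p set \<Rightarrow> ('s \<Rightarrow> real) \<Rightarrow> real"

definition is_eff :: "nat \<Rightarrow> 'p set \<Rightarrow> ('p, 's) eff \<Rightarrow> bool" where
  "is_eff n N E \<longleftrightarrow> (\<forall>C f. C \<subseteq> N \<longrightarrow> f \<in> Lfun n \<longrightarrow> E C f \<in> Ln n)"

definition outcome_monotonic :: "nat \<Rightarrow> 'p set \<Rightarrow> ('p, 's) eff \<Rightarrow> bool" where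
  "outcome_monotonic n N E \<longleftrightarrow>
     (\<forall>C f g. C \<subseteq> N \<longrightarrow> f \<in> Lfun n \<longrightarrow> g \<in> Lfun n \<longrightarrow> f \<ge> g \<longrightarrow> E C f \<ge> E C g)"

definition N_maximal :: "nat \<Rightarrow> 'p set \<Rightarrow> ('p, 's) eff \<Rightarrow> bool" where
  "N_maximal n N E \<longleftrightarrow>
     (\<forall>f \<in> Lfun n. lneg (E {} (\<lambda>s. lneg (f s))) \<le> E N f)"

definition superadditive :: "nat \<Rightarrow> 'p set \<Rightarrow> ('p, 's) eff \<Rightarrow> bool" where
  "superadditive n N E \<longleftrightarrow>
     (\<forall>C1 C2 f g. C1 \<subseteq> N \<longrightarrow> C2 \<subseteq> N \<longrightarrow> C1 \<inter> C2 = {} \<longrightarrow>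
        f \<in> Lfun n \<longrightarrow> g \<in> Lfun n \<longrightarrow>
        min (E C1 f) (E C2 g) \<le> E (C1 \<union> C2) (\<lambda>s. min (f s) (g s)))"

definition homogeneous :: "nat \<Rightarrow> 'p set \<Rightarrow> ('p, 's) eff \<Rightarrow> bool" where
  "homogeneous n N E \<longleftrightarrow>
     (\<forall>C f. C \<subseteq> N \<longrightarrow> f \<in> Lfun n \<longrightarrow>
        E C (\<lambda>s. loplus (f s) (f s)) = loplus (E C f) (E C f) \<and>
        E C (\<lambda>s. lodot (f s) (f s)) = lodot (E C f) (E C f))"

definition liveness :: "'p set \<Rightarrow> ('p, 's) eff \<Rightarrow> bool" where
  "liveness N E \<longleftrightarrow> (\<forall>C. C \<subseteq> N \<longrightarrow> E C (\<lambda>_. 1) = 1)"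

definition safety :: "'p set \<Rightarrow> ('p, 's) eff \<Rightarrow> bool" where
  "safety N E \<longleftrightarrow> (\<forall>C. C \<subseteq> N \<longrightarrow> E C (\<lambda>_. 0) = 0)"

definition principal :: "nat \<Rightarrow> ('p, 's) eff \<Rightarrow> bool" where
  "principal n E \<longleftrightarrow>
     (\<exists>g \<in> Lfun n. {f \<in> Lfun n. E {} f = 1} = {f \<in> Lfun n. f \<ge> (\<lambda>s. lodot_pow n (g s))})"

definition playable :: "nat \<Rightarrow> 'p set \<Rightarrow> ('p, 's) eff \<Rightarrow> bool" where
  "playable n N E \<longleftrightarrow> outcome_monotonic n N E \<and> N_maximal n N E \<and> superadditive n N E \<and>
     homogeneous n N E \<and> liveness N E \<and> safety N E"

definition truly_playable :: "nat \<Rightarrow> 'p set \<Rightarrow> ('p, 's) eff \<Rightarrow> bool" where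
  "truly_playable n N E \<longleftrightarrow> playable n N E \<and> principal n E"

text \<open>A game form with player set N, strategy sets Sg i (for i in N), outcome set
  the type 's and outcome function o, defined on strategy profiles (elements of
  PiE N Sg).\<close>
definition game_form :: "'p set \<Rightarrow> ('p \<Rightarrow> 'b set) \<Rightarrow> (('p \<Rightarrow> 'b) \<Rightarrow> 's) \<Rightarrow> bool" where
  "game_form N Sg out \<longleftrightarrow> (\<forall>i \<in> N. Sg i \<noteq> {})"

definition combine :: "'p set \<Rightarrow> ('p \<Rightarrow> 'b) \<Rightarrow> ('p \<Rightarrow> 'b) \<Rightarrow> ('p \<Rightarrow> 'b)" where
  "combine C sC sD = (\<lambda>i. if i \<in> C then sC i else sD i)"

definition E_G :: "'p set \<Rightarrow> ('p \<Rightarrow> 'b set) \<Rightarrow> (('p \<Rightarrow> 'b) \<Rightarrow> 's) \<Rightarrow> ('p, 's) eff" where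
  "E_G N Sg out C f =
     Max ((\<lambda>sC. Min ((\<lambda>sD. f (out (combine C sC sD))) ` (PiE (N - C) Sg))) ` (PiE C Sg))"

end

theory Submission
  imports Defs "HOL-Library.Indicator_Function"
begin

text \<open>Effectivity functions of game forms are truly playable by direct computation: the
  value is a max-min, so it commutes with the monotone maps x \<oplus> x and x \<odot> x, and the
  empty coalition forces exactly the functions that are 1 on all reachable outcomes.

  Conversely, homogeneity lets E commute with every ramp max 0 (min 1 (2^m x - c)),
  c < 2^m, since by the binary digits of c these are iterates of the two doubling maps.
  Choosing the ramp that is the step at k/n on L_n shows that E C f is determined by the
  crisp relation "C can force X", i.e. E C (indicator X) = 1. This relation inherits
  monotonicity, superadditivity, liveness, safety and maximality from E, and by
  principality the sets the empty coalition forces are those containing a core. Such a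
  crisp effectivity function is realized by a game form in the style of Moulin and Peleg,
  and E = E_G follows by comparing them at every threshold k/n.\<close>

section \<open>The chain L_n\<close>

lemma Ln_iff: "x \<in> Ln n \<longleftrightarrow> (\<exists>k\<le>n. x = real k / real n)"
  unfolding Ln_def by auto

lemma finite_Ln: "finite (Ln n)"
proof -
  have "Ln n = (\<lambda>k. real k / real n) ` {..n}"
    unfolding Ln_def by auto
  then show ?thesis by simp
qed

lemma Ln_nonneg: "x \<in> Ln n \<Longrightarrow> 0 \<le> x"
  by (auto simp: Ln_iff)

lemma Ln_le_1: "n \<ge> 1 \<Longrightarrow> x \<in> Ln n \<Longrightarrow> x \<le> 1"
  by (auto simp: Ln_iff divide_le_eq_1)

lemma zero_in_Ln: "0 \<in> Ln n"
  unfolding Ln_iff by (rule exI[of _ 0]) auto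

lemma one_in_Ln: "n \<ge> 1 \<Longrightarrow> 1 \<in> Ln n"
  unfolding Ln_iff by (rule exI[of _ n]) auto

lemma lneg_in_Ln:
  assumes "n \<ge> 1" "x \<in> Ln n"
  shows "lneg x \<in> Ln n"
proof -
  obtain k where "k \<le> n" "x = real k / real n"
    using assms(2) by (auto simp: Ln_iff)
  then have "lneg x = real (n - k) / real n"
    using assms(1) by (simp add: lneg_def of_nat_diff field_simps)
  then show ?thesis
    unfolding Ln_iff by (intro exI[of _ "n - k"]) auto
qed

lemma loplus_in_Ln:
  assumes n: "n \<ge> 1" and "x \<in> Ln n" "y \<in> Ln n"
  shows "loplus x y \<in> Ln n"
proof -
  obtain a b where ab: "a \<le> n" "b \<le> n" "x = real a / real n" "y = real b / real n"
    using assms by (auto simp: Ln_iff)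
  then have sum: "x + y = real (a + b) / real n"
    by (simp add: add_divide_distrib)
  show ?thesis
  proof (cases "a + b \<le> n")
    case True
    then have "loplus x y = real (a + b) / real n"
      using sum n by (simp add: loplus_def divide_le_eq_1)
    then show ?thesis
      using True unfolding Ln_iff by blast
  next
    case False
    then have "loplus x y = 1"
      using sum n by (simp add: loplus_def le_divide_eq_1)
    then show ?thesis
      using one_in_Ln[OF n] by simp
  qed
qed

lemma lodot_in_Ln:
  assumes n: "n \<ge> 1" and "x \<in> Ln n" "y \<in> Ln n"
  shows "lodot x y \<in> Ln n"
proof -
  obtain a b where ab: "a \<le> n" "b \<le> n" "x = real a / real n" "y = real b / real n"
    using assms by (auto simp: Ln_iff)
  show ?thesis
  proof (cases "n \<le> a + b")
    case True
    then have "x + y - 1 = real (a + b - n) / real n"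
      using ab n by (simp add: field_simps of_nat_diff)
    then have "lodot x y = real (a + b - n) / real n"
      by (simp add: lodot_def)
    then show ?thesis
      using ab unfolding Ln_iff by (intro exI[of _ "a + b - n"]) auto
  next
    case False
    then have "x + y \<le> 1"
      using ab n by (simp add: add_divide_distrib[symmetric] divide_le_eq_1)
    then have "lodot x y = 0"
      by (simp add: lodot_def)
    then show ?thesis
      using zero_in_Ln by simp
  qed
qed

lemma lodot_pow_eq_max:
  "0 \<le> x \<Longrightarrow> x \<le> 1 \<Longrightarrow> lodot_pow k x = max (real k * x - (real k - 1)) 0"
  by (induction k) (auto simp: lodot_def max_def algebra_simps)

lemma lodot_pow_Ln:
  assumes n: "n \<ge> 1" and x: "x \<in> Ln n"
  shows "lodot_pow n x = (if x = 1 then 1 else 0)"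
proof -
  obtain a where a: "a \<le> n" "x = real a / real n"
    using x by (auto simp: Ln_iff)
  have "0 \<le> x" "x \<le> 1"
    using Ln_nonneg Ln_le_1 n x by auto
  then have pow: "lodot_pow n x = max (real n * x - (real n - 1)) 0"
    by (rule lodot_pow_eq_max)
  show ?thesis
  proof (cases "a = n")
    case True
    then show ?thesis
      using a n pow by simp
  next
    case False
    then have "x \<noteq> 1" "real n * x - (real n - 1) \<le> 0"
      using a n by auto
    then show ?thesis
      using pow by simp
  qed
qed

lemma Ln_eq_iff_thresholds:
  assumes n: "n \<ge> 1" and "x \<in> Ln n" "y \<in> Ln n"
    and thresholds: "\<And>k. 1 \<le> k \<Longrightarrow> k \<le> n \<Longrightarrow> real k / real n \<le> x \<longleftrightarrow> real k / real n \<le> y"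
  shows "x = y"
proof -
  obtain i j where ij: "i \<le> n" "j \<le> n" "x = real i / real n" "y = real j / real n"
    using assms by (auto simp: Ln_iff)
  have "\<not> i < j" "\<not> j < i"
    using thresholds[of j] thresholds[of i] ij n by (auto simp: divide_le_cancel)
  then show ?thesis
    using ij by simp
qed

lemma Lfun_iff: "f \<in> Lfun n \<longleftrightarrow> (\<forall>s. f s \<in> Ln n)"
  by (simp add: Lfun_def)

lemma Lfun_const_in:
  "n \<ge> 1 \<Longrightarrow> (\<lambda>_. 1) \<in> Lfun n" "(\<lambda>_. 0) \<in> Lfun n"
  by (auto simp: Lfun_iff one_in_Ln zero_in_Ln)

lemma indicator_in_Lfun: "n \<ge> 1 \<Longrightarrow> indicator X \<in> Lfun n"
  by (auto simp: Lfun_iff one_in_Ln zero_in_Ln split: split_indicator)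

lemma Lfun_lneg: "n \<ge> 1 \<Longrightarrow> f \<in> Lfun n \<Longrightarrow> (\<lambda>s. lneg (f s)) \<in> Lfun n"
  by (simp add: Lfun_iff lneg_in_Ln)

lemma Lfun_min: "f \<in> Lfun n \<Longrightarrow> g \<in> Lfun n \<Longrightarrow> (\<lambda>s. min (f s) (g s)) \<in> Lfun n"
  by (simp add: Lfun_iff min_def)

lemma Lfun_loplus: "n \<ge> 1 \<Longrightarrow> f \<in> Lfun n \<Longrightarrow> (\<lambda>s. loplus (f s) (f s)) \<in> Lfun n"
  by (simp add: Lfun_iff loplus_in_Ln)

lemma Lfun_lodot: "n \<ge> 1 \<Longrightarrow> f \<in> Lfun n \<Longrightarrow> (\<lambda>s. lodot (f s) (f s)) \<in> Lfun n"
  by (simp add: Lfun_iff lodot_in_Ln)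

lemma truly_playable_cong:
  assumes n: "n \<ge> 1" and agree: "\<And>C f. C \<subseteq> N \<Longrightarrow> f \<in> Lfun n \<Longrightarrow> E C f = E' C f"
  shows "truly_playable n N E \<longleftrightarrow> truly_playable n N E'"
proof -
  have "outcome_monotonic n N E \<longleftrightarrow> outcome_monotonic n N E'"
    unfolding outcome_monotonic_def by (simp add: agree)
  moreover have "N_maximal n N E \<longleftrightarrow> N_maximal n N E'"
    unfolding N_maximal_def by (simp add: agree Lfun_lneg[OF n])
  moreover have "superadditive n N E \<longleftrightarrow> superadditive n N E'"
    unfolding superadditive_def by (simp add: agree Lfun_min)
  moreover have "homogeneous n N E \<longleftrightarrow> homogeneous n N E'"
    unfolding homogeneous_def by (simp add: agree Lfun_loplus[OF n] Lfun_lodot[OF n])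
  moreover have "liveness N E \<longleftrightarrow> liveness N E'" "safety N E \<longleftrightarrow> safety N E'"
    unfolding liveness_def safety_def by (simp_all add: agree Lfun_const_in(1)[OF n] Lfun_const_in(2))
  moreover have "{f \<in> Lfun n. E {} f = 1} = {f \<in> Lfun n. E' {} f = 1}"
    by (rule Collect_cong) (auto simp: agree)
  then have "principal n E \<longleftrightarrow> principal n E'"
    unfolding principal_def by (simp only:)
  ultimately show ?thesis
    unfolding truly_playable_def playable_def by simp
qed

section \<open>Effectivity functions of game forms\<close>

definition security_level ::
    "'p set \<Rightarrow> ('p \<Rightarrow> 'b set) \<Rightarrow> (('p \<Rightarrow> 'b) \<Rightarrow> 's) \<Rightarrow> 'p set \<Rightarrow> ('s \<Rightarrow> real) \<Rightarrow> ('p \<Rightarrow> 'b) \<Rightarrow> real"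
  where "security_level N Sg out C f sC = Min ((\<lambda>sD. f (out (combine C sC sD))) ` PiE (N - C) Sg)"

lemma E_G_eq_Max_security_level: "E_G N Sg out C f = Max (security_level N Sg out C f ` PiE C Sg)"
  unfolding E_G_def security_level_def ..

lemma game_form_PiE_nonempty: "game_form N Sg out \<Longrightarrow> A \<subseteq> N \<Longrightarrow> PiE A Sg \<noteq> {}"
  by (auto simp: game_form_def PiE_eq_empty_iff)

lemma combine_empty [simp]: "combine {} sC sD = sD"
  by (simp add: combine_def)

lemma combine_PiE_full: "sC \<in> PiE N Sg \<Longrightarrow> sD \<in> PiE {} Sg \<Longrightarrow> combine N sC sD = sC"
  by (auto simp: combine_def fun_eq_iff PiE_iff extensional_def)

lemma combine_in_PiE:
  "C \<subseteq> N \<Longrightarrow> sC \<in> PiE C Sg \<Longrightarrow> sD \<in> PiE (N - C) Sg \<Longrightarrow> combine C sC sD \<in> PiE N Sg"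
  by (auto simp: combine_def PiE_iff extensional_def)

lemma combine_restrict:
  "p \<in> PiE N Sg \<Longrightarrow> \<forall>i\<in>C. sC i = p i \<Longrightarrow> combine C sC (restrict p (N - C)) = p"
  by (auto simp: combine_def fun_eq_iff PiE_iff extensional_def)

context
  fixes n :: nat and N :: "'p set" and Sg :: "'p \<Rightarrow> 'b set" and out :: "('p \<Rightarrow> 'b) \<Rightarrow> 's"
    and C :: "'p set" and f :: "'s \<Rightarrow> real"
  assumes gf: "game_form N Sg out" and C: "C \<subseteq> N" and f: "f \<in> Lfun n"
begin

lemma finite_responses: "finite ((\<lambda>sD. f (out (combine C sC sD))) ` PiE (N - C) Sg)"
  by (rule finite_subset[OF _ finite_Ln[of n]]) (use f in \<open>auto simp: Lfun_iff\<close>)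

lemma responses_nonempty: "(\<lambda>sD. f (out (combine C sC sD))) ` PiE (N - C) Sg \<noteq> {}"
  using game_form_PiE_nonempty[OF gf Diff_subset] by simp

lemma security_level_in_Ln: "security_level N Sg out C f sC \<in> Ln n"
proof -
  have "security_level N Sg out C f sC \<in> (\<lambda>sD. f (out (combine C sC sD))) ` PiE (N - C) Sg"
    unfolding security_level_def using finite_responses responses_nonempty by (rule Min_in)
  then show ?thesis
    using f by (auto simp: Lfun_iff)
qed

lemma finite_security_levels: "finite (security_level N Sg out C f ` PiE C Sg)"
  by (rule finite_subset[OF _ finite_Ln[of n]]) (use security_level_in_Ln in auto)

lemma security_levels_nonempty: "security_level N Sg out C f ` PiE C Sg \<noteq> {}"
  using game_form_PiE_nonempty[OF gf C] by simp

lemma E_G_in_Ln: "E_G N Sg out C f \<in> Ln n"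
proof -
  have "E_G N Sg out C f \<in> security_level N Sg out C f ` PiE C Sg"
    unfolding E_G_eq_Max_security_level
    using finite_security_levels security_levels_nonempty by (rule Max_in)
  then show ?thesis
    using security_level_in_Ln by auto
qed

lemma le_E_G_iff:
  "t \<le> E_G N Sg out C f \<longleftrightarrow>
     (\<exists>sC\<in>PiE C Sg. \<forall>sD\<in>PiE (N - C) Sg. t \<le> f (out (combine C sC sD)))"
  unfolding E_G_eq_Max_security_level Max_ge_iff[OF finite_security_levels security_levels_nonempty]
  by (auto simp: security_level_def Min_ge_iff[OF finite_responses responses_nonempty])

lemma le_E_G_iff_extensions:
  "t \<le> E_G N Sg out C f \<longleftrightarrow>
     (\<exists>sC\<in>PiE C Sg. \<forall>p\<in>PiE N Sg. (\<forall>i\<in>C. sC i = p i) \<longrightarrow> t \<le> f (out p))"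
  unfolding le_E_G_iff
proof (intro bex_cong refl iffI ballI impI)
  fix sC p
  assume "sC \<in> PiE C Sg" "\<forall>sD\<in>PiE (N - C) Sg. t \<le> f (out (combine C sC sD))"
    and p: "p \<in> PiE N Sg" "\<forall>i\<in>C. sC i = p i"
  moreover have "restrict p (N - C) \<in> PiE (N - C) Sg"
    using p(1) by (auto simp: PiE_iff)
  ultimately show "t \<le> f (out p)"
    using combine_restrict[OF p] by metis
next
  fix sC sD
  assume sC: "sC \<in> PiE C Sg" and "\<forall>p\<in>PiE N Sg. (\<forall>i\<in>C. sC i = p i) \<longrightarrow> t \<le> f (out p)"
    and sD: "sD \<in> PiE (N - C) Sg"
  moreover have "combine C sC sD \<in> PiE N Sg"
    using C sC sD by (rule combine_in_PiE)
  moreover have "\<forall>i\<in>C. sC i = combine C sC sD i"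
    by (simp add: combine_def)
  ultimately show "t \<le> f (out (combine C sC sD))"
    by blast
qed

end

lemma E_G_empty_coalition: "E_G N Sg out {} f = Min ((\<lambda>p. f (out p)) ` PiE N Sg)"
  by (simp add: E_G_def)

context
  fixes n :: nat and N :: "'p set" and Sg :: "'p \<Rightarrow> 'b set" and out :: "('p \<Rightarrow> 'b) \<Rightarrow> 's"
    and f :: "'s \<Rightarrow> real"
  assumes gf: "game_form N Sg out" and f: "f \<in> Lfun n"
begin

lemma finite_outcome_values: "finite ((\<lambda>p. f (out p)) ` PiE N Sg)"
  by (rule finite_subset[OF _ finite_Ln[of n]]) (use f in \<open>auto simp: Lfun_iff\<close>)

lemma outcome_values_nonempty: "(\<lambda>p. f (out p)) ` PiE N Sg \<noteq> {}"
  using game_form_PiE_nonempty[OF gf order_refl] by simp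

lemma E_G_grand_coalition: "E_G N Sg out N f = Max ((\<lambda>p. f (out p)) ` PiE N Sg)"
proof -
  have "Min ((\<lambda>sD. f (out (combine N p sD))) ` PiE {} Sg) = f (out p)" if "p \<in> PiE N Sg" for p
    using combine_PiE_full[OF that] by simp
  then show ?thesis
    unfolding E_G_def by (simp cong: image_cong)
qed

end

lemma E_G_const:
  assumes gf: "game_form N Sg out" and C: "C \<subseteq> N"
  shows "E_G N Sg out C (\<lambda>_. c) = c"
  using game_form_PiE_nonempty[OF gf C] game_form_PiE_nonempty[OF gf Diff_subset[of N C]]
  by (simp add: E_G_def image_constant_conv)

lemma E_G_mono_commute:
  assumes gf: "game_form N Sg out" and C: "C \<subseteq> N" and f: "f \<in> Lfun n"
    and h: "mono h" and hf: "(\<lambda>s. h (f s)) \<in> Lfun n"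
  shows "E_G N Sg out C (\<lambda>s. h (f s)) = h (E_G N Sg out C f)"
proof -
  have "security_level N Sg out C (\<lambda>s. h (f s)) sC = h (security_level N Sg out C f sC)" for sC
    unfolding security_level_def
    using mono_Min_commute[OF h finite_responses[OF gf C f] responses_nonempty[OF gf C f]]
    by (simp add: image_image)
  then show ?thesis
    unfolding E_G_eq_Max_security_level
    using mono_Max_commute[OF h finite_security_levels[OF gf C f] security_levels_nonempty[OF gf C f]]
    by (simp add: image_image)
qed

lemma E_G_outcome_monotonic:
  fixes out :: "('p \<Rightarrow> 'b) \<Rightarrow> 's"
  assumes gf: "game_form N Sg out"
  shows "outcome_monotonic n N (E_G N Sg out)"
  unfolding outcome_monotonic_def
proof (intro allI impI)
  fix C and f g :: "'s \<Rightarrow> real"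
  assume C: "C \<subseteq> N" and f: "f \<in> Lfun n" and g: "g \<in> Lfun n" and "f \<ge> g"
  obtain sC where sC: "sC \<in> PiE C Sg"
    and forces: "\<forall>sD\<in>PiE (N - C) Sg. E_G N Sg out C g \<le> g (out (combine C sC sD))"
    using le_E_G_iff[OF gf C g, of "E_G N Sg out C g"] by blast
  have "\<forall>sD\<in>PiE (N - C) Sg. E_G N Sg out C g \<le> f (out (combine C sC sD))"
    using forces \<open>f \<ge> g\<close> by (meson le_fun_def order_trans)
  with sC show "E_G N Sg out C f \<ge> E_G N Sg out C g"
    unfolding le_E_G_iff[OF gf C f] by blast
qed

lemma E_G_N_maximal:
  fixes out :: "('p \<Rightarrow> 'b) \<Rightarrow> 's"
  assumes n: "n \<ge> 1" and gf: "game_form N Sg out"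
  shows "N_maximal n N (E_G N Sg out)"
  unfolding N_maximal_def
proof
  fix f :: "'s \<Rightarrow> real"
  assume f: "f \<in> Lfun n"
  have "f (out p) \<le> E_G N Sg out N f" if "p \<in> PiE N Sg" for p
    unfolding E_G_grand_coalition[OF gf f] using that finite_outcome_values[OF gf f] by simp
  then have "1 - E_G N Sg out N f \<le> E_G N Sg out {} (\<lambda>s. lneg (f s))"
    unfolding E_G_empty_coalition
    using finite_outcome_values[OF gf Lfun_lneg[OF n f]] outcome_values_nonempty[OF gf Lfun_lneg[OF n f]]
    by (auto simp: lneg_def)
  then show "lneg (E_G N Sg out {} (\<lambda>s. lneg (f s))) \<le> E_G N Sg out N f"
    by (simp add: lneg_def)
qed

lemma E_G_superadditive:
  fixes out :: "('p \<Rightarrow> 'b) \<Rightarrow> 's"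
  assumes gf: "game_form N Sg out"
  shows "superadditive n N (E_G N Sg out)"
  unfolding superadditive_def
proof (intro allI impI)
  fix C1 C2 and f g :: "'s \<Rightarrow> real"
  assume C1: "C1 \<subseteq> N" and C2: "C2 \<subseteq> N" and disjoint: "C1 \<inter> C2 = {}"
    and f: "f \<in> Lfun n" and g: "g \<in> Lfun n"
  define t where "t = min (E_G N Sg out C1 f) (E_G N Sg out C2 g)"
  obtain s1 where s1: "s1 \<in> PiE C1 Sg"
    and forces1: "\<forall>p\<in>PiE N Sg. (\<forall>i\<in>C1. s1 i = p i) \<longrightarrow> t \<le> f (out p)"
    using le_E_G_iff_extensions[OF gf C1 f, of t] by (auto simp: t_def)
  obtain s2 where s2: "s2 \<in> PiE C2 Sg"
    and forces2: "\<forall>p\<in>PiE N Sg. (\<forall>i\<in>C2. s2 i = p i) \<longrightarrow> t \<le> g (out p)"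
    using le_E_G_iff_extensions[OF gf C2 g, of t] by (auto simp: t_def)
  define s12 where "s12 = restrict (combine C1 s1 s2) (C1 \<union> C2)"
  have s12: "s12 \<in> PiE (C1 \<union> C2) Sg"
    using s1 s2 by (auto simp: s12_def combine_def PiE_iff)
  have "t \<le> min (f (out p)) (g (out p))"
    if p: "p \<in> PiE N Sg" and extends: "\<forall>i\<in>C1 \<union> C2. s12 i = p i" for p
  proof -
    have "s1 i = p i" if "i \<in> C1" for i
      using bspec[OF extends, of i] that by (simp add: s12_def combine_def)
    moreover have "s2 i = p i" if "i \<in> C2" for i
      using bspec[OF extends, of i] that disjoint by (auto simp: s12_def combine_def split: if_splits)
    ultimately show ?thesis
      using forces1[rule_format, OF p] forces2[rule_format, OF p] by simp
  qed
  then have "t \<le> E_G N Sg out (C1 \<union> C2) (\<lambda>s. min (f s) (g s))"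
    unfolding le_E_G_iff_extensions[OF gf Un_least[OF C1 C2] Lfun_min[OF f g]]
    using s12 by auto
  then show "min (E_G N Sg out C1 f) (E_G N Sg out C2 g)
      \<le> E_G N Sg out (C1 \<union> C2) (\<lambda>s. min (f s) (g s))"
    by (simp add: t_def)
qed

lemma E_G_homogeneous:
  fixes out :: "('p \<Rightarrow> 'b) \<Rightarrow> 's"
  assumes n: "n \<ge> 1" and gf: "game_form N Sg out"
  shows "homogeneous n N (E_G N Sg out)"
proof -
  have mono: "mono (\<lambda>x. loplus x x)" "mono (\<lambda>x. lodot x x)"
    by (auto simp: mono_def loplus_def lodot_def)
  show ?thesis
    unfolding homogeneous_def
  proof (intro allI impI conjI)
    fix C and f :: "'s \<Rightarrow> real"
    assume C: "C \<subseteq> N" and f: "f \<in> Lfun n"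
    show "E_G N Sg out C (\<lambda>s. loplus (f s) (f s)) = loplus (E_G N Sg out C f) (E_G N Sg out C f)"
      by (rule E_G_mono_commute[OF gf C f mono(1) Lfun_loplus[OF n f]])
    show "E_G N Sg out C (\<lambda>s. lodot (f s) (f s)) = lodot (E_G N Sg out C f) (E_G N Sg out C f)"
      by (rule E_G_mono_commute[OF gf C f mono(2) Lfun_lodot[OF n f]])
  qed
qed

lemma E_G_principal:
  fixes out :: "('p \<Rightarrow> 'b) \<Rightarrow> 's"
  assumes n: "n \<ge> 1" and gf: "game_form N Sg out"
  shows "principal n (E_G N Sg out)"
  unfolding principal_def
proof
  let ?g = "indicator (out ` PiE N Sg) :: 's \<Rightarrow> real"
  show g: "?g \<in> Lfun n"
    using n by (rule indicator_in_Lfun)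
  have "(\<lambda>s. lodot_pow n (?g s)) = ?g"
    using lodot_pow_Ln[OF n] g by (auto simp: Lfun_iff fun_eq_iff split: split_indicator)
  moreover have "E_G N Sg out {} f = 1 \<longleftrightarrow> ?g \<le> f" if f: "f \<in> Lfun n" for f
  proof -
    have "E_G N Sg out {} f = 1 \<longleftrightarrow> 1 \<le> E_G N Sg out {} f"
      using Ln_le_1[OF n E_G_in_Ln[OF gf empty_subsetI f]] by auto
    also have "\<dots> \<longleftrightarrow> (\<forall>p\<in>PiE N Sg. 1 \<le> f (out p))"
      unfolding E_G_empty_coalition
      using finite_outcome_values[OF gf f] outcome_values_nonempty[OF gf f] by simp
    also have "\<dots> \<longleftrightarrow> ?g \<le> f"
      using f Ln_nonneg by (auto simp: le_fun_def Lfun_iff split: split_indicator)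
    finally show ?thesis .
  qed
  ultimately show "{f \<in> Lfun n. E_G N Sg out {} f = 1} = {f \<in> Lfun n. (\<lambda>s. lodot_pow n (?g s)) \<le> f}"
    by auto
qed

theorem truly_playable_E_G:
  fixes out :: "('p \<Rightarrow> 'b) \<Rightarrow> 's"
  assumes n: "n \<ge> 1" and gf: "game_form N Sg out"
  shows "truly_playable n N (E_G N Sg out)"
  unfolding truly_playable_def playable_def liveness_def safety_def
  using E_G_outcome_monotonic[OF gf] E_G_N_maximal[OF n gf] E_G_superadditive[OF gf]
    E_G_homogeneous[OF n gf] E_G_const[OF gf] E_G_principal[OF n gf]
  by simp

section \<open>Threshold functions from homogeneity\<close>

definition ramp :: "nat \<Rightarrow> nat \<Rightarrow> real \<Rightarrow> real" where
  "ramp m c x = max 0 (min 1 (2 ^ m * x - real c))"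

lemma ramp_0: "0 \<le> x \<Longrightarrow> x \<le> 1 \<Longrightarrow> ramp 0 0 x = x"
  by (simp add: ramp_def)

lemma ramp_Suc:
  "ramp (Suc m) c x =
     (if even c then loplus (ramp m (c div 2) x) (ramp m (c div 2) x)
      else lodot (ramp m (c div 2) x) (ramp m (c div 2) x))"
proof (cases "even c")
  case True
  then obtain c' where c: "c = 2 * c'" ..
  have "ramp (Suc m) c x = max 0 (min 1 (2 * (2 ^ m * x - real c')))"
    by (simp add: ramp_def c algebra_simps)
  then show ?thesis
    using True c by (simp add: ramp_def loplus_def max_def min_def)
next
  case False
  then obtain c' where c: "c = 2 * c' + 1"
    using oddE by blast
  have "ramp (Suc m) c x = max 0 (min 1 (2 * (2 ^ m * x - real c') - 1))"
    by (simp add: ramp_def c algebra_simps)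
  then show ?thesis
    using False c by (simp add: ramp_def lodot_def max_def min_def)
qed

lemma ramp_in_Ln:
  assumes n: "n \<ge> 1" and x: "x \<in> Ln n"
  shows "c < 2 ^ m \<Longrightarrow> ramp m c x \<in> Ln n"
proof (induction m arbitrary: c)
  case 0
  then show ?case
    using ramp_0 Ln_nonneg Ln_le_1[OF n] x by simp
next
  case (Suc m)
  then have "ramp m (c div 2) x \<in> Ln n"
    by simp
  then show ?case
    unfolding ramp_Suc using loplus_in_Ln[OF n] lodot_in_Ln[OF n] by simp
qed

lemma ramp_step_Ln:
  assumes n: "n \<ge> 1" and k: "1 \<le> k" "k \<le> n"
  obtains m c where "c < 2 ^ m"
    and "\<And>x. x \<in> Ln n \<Longrightarrow> ramp m c x = (if real k / real n \<le> x then 1 else 0)"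
proof -
  text \<open>With slope 2^m/n \<ge> 2 the ramp rises from 0 to 1 between (k-1)/n and k/n.\<close>
  define m where "m = n + 1"
  define c where "c = nat \<lceil>2 ^ m * (real k - 1) / real n\<rceil>"
  define q where "q = (2::real) ^ m / real n"
  have n_pos: "real n > 0"
    using n by simp
  have "real n < 2 ^ n"
    using less_exp[of n] by (metis of_nat_less_iff of_nat_numeral of_nat_power)
  then have q: "q \<ge> 2"
    using n_pos by (simp add: q_def m_def field_simps)
  have "real c = of_int \<lceil>q * (real k - 1)\<rceil>"
    unfolding c_def q_def using k by simp
  then have c_lower: "q * (real k - 1) \<le> real c" and c_upper: "real c < q * real k - q + 1"
    using ceiling_correct[of "q * (real k - 1)"] by (simp_all add: algebra_simps)
  have "q * (real k - 1) \<le> q * (real n - 1)"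
    using k q by (intro mult_left_mono) auto
  also have "\<dots> = 2 ^ m - q"
    using n_pos by (simp add: q_def field_simps)
  finally have "q * real k \<le> 2 ^ m"
    by (simp add: algebra_simps)
  then have "real c < 2 ^ m"
    using c_upper q by linarith
  then have "real c < real ((2::nat) ^ m)"
    by (simp only: of_nat_power of_nat_numeral)
  then have "c < 2 ^ m"
    by (simp only: of_nat_less_iff)
  moreover have "ramp m c x = (if real k / real n \<le> x then 1 else 0)" if "x \<in> Ln n" for x
  proof -
    obtain j where j: "j \<le> n" "x = real j / real n"
      using \<open>x \<in> Ln n\<close> by (auto simp: Ln_iff)
    then have ramp_x: "ramp m c x = max 0 (min 1 (q * real j - real c))"
      by (simp add: ramp_def q_def)
    show ?thesis
    proof (cases "k \<le> j")
      case True
      then have "q * real k \<le> q * real j"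
        using q by (intro mult_left_mono) auto
      then have "1 \<le> q * real j - real c"
        using c_upper q by linarith
      moreover have "real k / real n \<le> x"
        using True j n_pos by (simp add: divide_right_mono)
      ultimately show ?thesis
        unfolding ramp_x by simp
    next
      case False
      then have "q * real j \<le> q * (real k - 1)"
        using q by (intro mult_left_mono) auto
      then have "q * real j - real c \<le> 0"
        using c_lower by simp
      moreover have "\<not> real k / real n \<le> x"
        using False j n_pos by (simp add: divide_le_cancel)
      ultimately show ?thesis
        unfolding ramp_x by simp
    qed
  qed
  ultimately show ?thesis
    using that by blast
qed

context
  fixes n :: nat and N :: "'p set" and E :: "('p, 's) eff"
  assumes n: "n \<ge> 1" and eff: "is_eff n N E" and hom: "homogeneous n N E"
begin

lemma E_in_Ln: "C \<subseteq> N \<Longrightarrow> f \<in> Lfun n \<Longrightarrow> E C f \<in> Ln n"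
  using eff by (simp add: is_eff_def)

lemma E_ramp_commute:
  assumes C: "C \<subseteq> N" and f: "f \<in> Lfun n"
  shows "c < 2 ^ m \<Longrightarrow> E C (\<lambda>s. ramp m c (f s)) = ramp m c (E C f)"
proof (induction m arbitrary: c)
  case 0
  have "(\<lambda>s. ramp 0 0 (f s)) = f"
    using f by (simp add: Lfun_iff fun_eq_iff ramp_0 Ln_nonneg[of _ n] Ln_le_1[OF n])
  moreover have "ramp 0 0 (E C f) = E C f"
    using E_in_Ln[OF C f] Ln_nonneg Ln_le_1[OF n] by (simp add: ramp_0)
  ultimately show ?case
    using 0 by simp
next
  case (Suc m)
  define f' where "f' = (\<lambda>s. ramp m (c div 2) (f s))"
  have "c div 2 < 2 ^ m"
    using Suc.prems by simp
  then have f': "f' \<in> Lfun n" and IH: "E C f' = ramp m (c div 2) (E C f)"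
    using f ramp_in_Ln[OF n] Suc.IH by (auto simp: f'_def Lfun_iff)
  have "E C (\<lambda>s. loplus (f' s) (f' s)) = loplus (E C f') (E C f')"
    "E C (\<lambda>s. lodot (f' s) (f' s)) = lodot (E C f') (E C f')"
    using hom C f' by (simp_all add: homogeneous_def)
  then show ?case
    unfolding ramp_Suc IH[symmetric] f'_def by simp
qed

lemma E_indicator_0_or_1:
  assumes C: "C \<subseteq> N"
  shows "E C (indicator X) = 0 \<or> E C (indicator X) = 1"
proof -
  have "(\<lambda>s. lodot (indicator X s) (indicator X s)) = (indicator X :: 's \<Rightarrow> real)"
    by (auto simp: lodot_def fun_eq_iff split: split_indicator)
  moreover have "E C (\<lambda>s. lodot (indicator X s) (indicator X s))
      = lodot (E C (indicator X)) (E C (indicator X))"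
    using hom[unfolded homogeneous_def, rule_format, OF C indicator_in_Lfun[OF n]] ..
  ultimately have "E C (indicator X) = lodot (E C (indicator X)) (E C (indicator X))"
    by simp
  then show ?thesis
    by (auto simp: lodot_def max_def split: if_splits)
qed

lemma le_E_iff_indicator:
  assumes C: "C \<subseteq> N" and f: "f \<in> Lfun n" and k: "1 \<le> k" "k \<le> n"
  shows "real k / real n \<le> E C f \<longleftrightarrow> E C (indicator {s. real k / real n \<le> f s}) = 1"
proof -
  obtain m c where c: "c < 2 ^ m"
    and step: "\<And>x. x \<in> Ln n \<Longrightarrow> ramp m c x = (if real k / real n \<le> x then 1 else 0)"
    using ramp_step_Ln[OF n k] by blast
  have "(\<lambda>s. ramp m c (f s)) = indicator {s. real k / real n \<le> f s}"
    using f step by (auto simp: Lfun_iff fun_eq_iff split: split_indicator)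
  then have "E C (indicator {s. real k / real n \<le> f s}) = ramp m c (E C f)"
    using E_ramp_commute[OF C f c] by simp
  then show ?thesis
    using step[OF E_in_Ln[OF C f]] by simp
qed

end

section \<open>The crisp part of a truly playable effectivity function\<close>

locale truly_playable_effectivity =
  fixes n :: nat and N :: "'p set" and E :: "('p, 's) eff"
  assumes n: "n \<ge> 1" and finite_N: "finite N" and eff: "is_eff n N E"
    and truly_playable: "truly_playable n N E"
begin

lemma E_mono: "C \<subseteq> N \<Longrightarrow> f \<in> Lfun n \<Longrightarrow> g \<in> Lfun n \<Longrightarrow> g \<le> f \<Longrightarrow> E C g \<le> E C f"
  using truly_playable by (simp add: truly_playable_def playable_def outcome_monotonic_def)

lemma E_N_maximal: "f \<in> Lfun n \<Longrightarrow> lneg (E {} (\<lambda>s. lneg (f s))) \<le> E N f"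
  using truly_playable by (simp add: truly_playable_def playable_def N_maximal_def)

lemma E_superadditive:
  "C1 \<subseteq> N \<Longrightarrow> C2 \<subseteq> N \<Longrightarrow> C1 \<inter> C2 = {} \<Longrightarrow> f \<in> Lfun n \<Longrightarrow> g \<in> Lfun n \<Longrightarrow>
    min (E C1 f) (E C2 g) \<le> E (C1 \<union> C2) (\<lambda>s. min (f s) (g s))"
  using truly_playable by (simp add: truly_playable_def playable_def superadditive_def)

lemma homogeneous: "homogeneous n N E"
  using truly_playable by (simp add: truly_playable_def playable_def)

lemma E_const_1: "C \<subseteq> N \<Longrightarrow> E C (\<lambda>_. 1) = 1"
  using truly_playable by (simp add: truly_playable_def playable_def liveness_def)

lemma E_const_0: "C \<subseteq> N \<Longrightarrow> E C (\<lambda>_. 0) = 0"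
  using truly_playable by (simp add: truly_playable_def playable_def safety_def)

definition can_force :: "'p set \<Rightarrow> 's set \<Rightarrow> bool" where
  "can_force C X \<longleftrightarrow> E C (indicator X) = 1"

lemma E_indicator_le_1: "C \<subseteq> N \<Longrightarrow> E C (indicator X) \<le> 1"
  using Ln_le_1[OF n E_in_Ln[OF n eff homogeneous _ indicator_in_Lfun[OF n]]] .

lemma can_force_superset:
  assumes C: "C \<subseteq> N" and "can_force C X" and "X \<subseteq> Y"
  shows "can_force C Y"
proof -
  have "indicator X \<le> (indicator Y :: 's \<Rightarrow> real)"
    using \<open>X \<subseteq> Y\<close> by (auto simp: le_fun_def split: split_indicator)
  then have "E C (indicator X) \<le> E C (indicator Y)"
    by (rule E_mono[OF C indicator_in_Lfun[OF n] indicator_in_Lfun[OF n]])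
  then show ?thesis
    using \<open>can_force C X\<close> E_indicator_le_1[OF C, of Y] by (simp add: can_force_def)
qed

lemma can_force_Int:
  assumes C1: "C1 \<subseteq> N" and C2: "C2 \<subseteq> N" and disjoint: "C1 \<inter> C2 = {}"
    and "can_force C1 X" and "can_force C2 Y"
  shows "can_force (C1 \<union> C2) (X \<inter> Y)"
proof -
  have "min (E C1 (indicator X)) (E C2 (indicator Y))
      \<le> E (C1 \<union> C2) (\<lambda>s. min (indicator X s) (indicator Y s))"
    using C1 C2 disjoint indicator_in_Lfun[OF n] indicator_in_Lfun[OF n] by (rule E_superadditive)
  then have "1 \<le> E (C1 \<union> C2) (indicator (X \<inter> Y))"
    using \<open>can_force C1 X\<close> \<open>can_force C2 Y\<close>
    by (simp add: can_force_def indicator_inter_min[abs_def])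
  then show ?thesis
    using E_indicator_le_1[of "C1 \<union> C2" "X \<inter> Y"] C1 C2 by (simp add: can_force_def)
qed

lemma can_force_coalition_superset:
  assumes "C \<subseteq> D" and "D \<subseteq> N" and "can_force C X"
  shows "can_force D X"
proof -
  have "can_force (D - C) UNIV"
    using E_const_1[of "D - C"] \<open>D \<subseteq> N\<close> by (auto simp: can_force_def)
  then have "can_force (C \<union> (D - C)) (X \<inter> UNIV)"
    using assms by (intro can_force_Int) auto
  then show ?thesis
    using \<open>C \<subseteq> D\<close> by (simp add: Un_absorb1)
qed

lemma not_can_force_empty: "C \<subseteq> N \<Longrightarrow> \<not> can_force C {}"
  using E_const_0[of C] by (simp add: can_force_def indicator_def[abs_def])

definition core :: "'s set" where
  "core = \<Inter> {X. can_force {} X}"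

lemma can_force_empty_iff: "can_force {} X \<longleftrightarrow> core \<subseteq> X"
proof -
  obtain g where g: "g \<in> Lfun n"
    and g_filter: "{f \<in> Lfun n. E {} f = 1} = {f \<in> Lfun n. (\<lambda>s. lodot_pow n (g s)) \<le> f}"
    using truly_playable by (auto simp: truly_playable_def principal_def)
  have "can_force {} Y \<longleftrightarrow> {s. g s = 1} \<subseteq> Y" for Y
  proof -
    have "can_force {} Y \<longleftrightarrow> (\<lambda>s. lodot_pow n (g s)) \<le> indicator Y"
      using g_filter indicator_in_Lfun[OF n, of Y] by (auto simp: can_force_def)
    also have "\<dots> \<longleftrightarrow> {s. g s = 1} \<subseteq> Y"
      using g lodot_pow_Ln[OF n] by (auto simp: Lfun_iff le_fun_def split: split_indicator)
    finally show ?thesis .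
  qed
  then have "{Y. can_force {} Y} = {Y. {s. g s = 1} \<subseteq> Y}"
    by simp
  then have "core = {s. g s = 1}"
    unfolding core_def by (simp only:) blast
  then show ?thesis
    using \<open>can_force {} X \<longleftrightarrow> {s. g s = 1} \<subseteq> X\<close> by simp
qed

lemma can_force_grand_coalition:
  assumes "X \<inter> core \<noteq> {}"
  shows "can_force N X"
proof -
  have "\<not> can_force {} (- X)"
    unfolding can_force_empty_iff using assms by blast
  then have "E {} (indicator (- X)) = 0"
    using E_indicator_0_or_1[OF n eff homogeneous empty_subsetI] by (auto simp: can_force_def)
  moreover have "(\<lambda>s. lneg (indicator X s)) = (indicator (- X) :: 's \<Rightarrow> real)"
    by (auto simp: lneg_def fun_eq_iff split: split_indicator)
  ultimately have "1 \<le> E N (indicator X)"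
    using E_N_maximal[OF indicator_in_Lfun[OF n, of X]] by (simp add: lneg_def)
  then show ?thesis
    using E_indicator_le_1[OF order_refl, of X] by (simp add: can_force_def)
qed

lemma le_E_iff_can_force:
  "C \<subseteq> N \<Longrightarrow> f \<in> Lfun n \<Longrightarrow> 1 \<le> k \<Longrightarrow> k \<le> n \<Longrightarrow>
    real k / real n \<le> E C f \<longleftrightarrow> can_force C {s. real k / real n \<le> f s}"
  unfolding can_force_def by (rule le_E_iff_indicator[OF n eff homogeneous])

end

section \<open>A game form realizing a truly playable effectivity function\<close>

text \<open>A strategy names a coalition, a target set, a proposed outcome and an integer bid; the
  target is encoded as the 1-set of a real function to fit the strategy type of the theorem.\<close>

type_synonym ('p, 's) strategy = "'p set \<times> ('s \<Rightarrow> real) \<times> 's \<times> nat"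

definition coalition :: "('p, 's) strategy \<Rightarrow> 'p set" where
  "coalition x = fst x"

definition target :: "('p, 's) strategy \<Rightarrow> 's set" where
  "target x = {s. fst (snd x) s = 1}"

definition proposal :: "('p, 's) strategy \<Rightarrow> 's" where
  "proposal x = fst (snd (snd x))"

definition bid :: "('p, 's) strategy \<Rightarrow> nat" where
  "bid x = snd (snd (snd x))"

lemma strategy_simps [simp]:
  "coalition (C, h, t, k) = C" "target (C, h, t, k) = {s. h s = 1}"
  "proposal (C, h, t, k) = t" "bid (C, h, t, k) = k"
  by (simp_all add: coalition_def target_def proposal_def bid_def)

context truly_playable_effectivity
begin

definition active :: "('p \<Rightarrow> ('p, 's) strategy) \<Rightarrow> 'p \<Rightarrow> bool" where
  "active \<sigma> i \<longleftrightarrow> i \<in> coalition (\<sigma> i) \<and> coalition (\<sigma> i) \<subseteq> N \<and>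
     can_force (coalition (\<sigma> i)) (target (\<sigma> i)) \<and>
     (\<forall>j\<in>coalition (\<sigma> i). coalition (\<sigma> j) = coalition (\<sigma> i) \<and> target (\<sigma> j) = target (\<sigma> i))"

definition active_players :: "('p \<Rightarrow> ('p, 's) strategy) \<Rightarrow> 'p set" where
  "active_players \<sigma> = (\<Union>i\<in>{i\<in>N. active \<sigma> i}. coalition (\<sigma> i))"

definition admissible :: "('p \<Rightarrow> ('p, 's) strategy) \<Rightarrow> 's set" where
  "admissible \<sigma> = core \<inter> (\<Inter>i\<in>{i\<in>N. active \<sigma> i}. target (\<sigma> i))"

definition top_proposal :: "('p \<Rightarrow> ('p, 's) strategy) \<Rightarrow> 's" where
  "top_proposal \<sigma> = (SOME t. \<exists>i\<in>N. proposal (\<sigma> i) = t \<and> bid (\<sigma> i) = Max ((\<lambda>i. bid (\<sigma> i)) ` N))"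

definition outcome :: "('p \<Rightarrow> ('p, 's) strategy) \<Rightarrow> 's" where
  "outcome \<sigma> = (if top_proposal \<sigma> \<in> admissible \<sigma> then top_proposal \<sigma> else (SOME t. t \<in> admissible \<sigma>))"

lemma activeD:
  assumes "active \<sigma> i"
  shows "i \<in> coalition (\<sigma> i)" "coalition (\<sigma> i) \<subseteq> N"
    "can_force (coalition (\<sigma> i)) (target (\<sigma> i))"
    "j \<in> coalition (\<sigma> i) \<Longrightarrow> coalition (\<sigma> j) = coalition (\<sigma> i)"
    "j \<in> coalition (\<sigma> i) \<Longrightarrow> target (\<sigma> j) = target (\<sigma> i)"
  using assms unfolding active_def by blast+

lemma active_coalitions_disjoint_or_equal:
  assumes "active \<sigma> i" "active \<sigma> j" "coalition (\<sigma> i) \<inter> coalition (\<sigma> j) \<noteq> {}"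
  shows "coalition (\<sigma> i) = coalition (\<sigma> j) \<and> target (\<sigma> i) = target (\<sigma> j)"
proof -
  obtain l where "l \<in> coalition (\<sigma> i)" "l \<in> coalition (\<sigma> j)"
    using assms(3) by blast
  then show ?thesis
    using activeD(4,5)[OF assms(1)] activeD(4,5)[OF assms(2)] by metis
qed

lemma can_force_active_union:
  assumes "finite I"
  shows "I \<subseteq> {i\<in>N. active \<sigma> i} \<Longrightarrow>
    can_force (\<Union>i\<in>I. coalition (\<sigma> i)) (core \<inter> (\<Inter>i\<in>I. target (\<sigma> i)))"
  using assms
proof (induction I rule: finite_induct)
  case empty
  then show ?case
    by (simp add: can_force_empty_iff)
next
  case (insert i I)
  then have IH: "can_force (\<Union>i\<in>I. coalition (\<sigma> i)) (core \<inter> (\<Inter>i\<in>I. target (\<sigma> i)))"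
    and i: "i \<in> N" "active \<sigma> i" and I: "\<forall>j\<in>I. j \<in> N \<and> active \<sigma> j"
    by auto
  show ?case
  proof (cases "\<exists>j\<in>I. coalition (\<sigma> i) \<inter> coalition (\<sigma> j) \<noteq> {}")
    case True
    then obtain j where j: "j \<in> I" "coalition (\<sigma> i) = coalition (\<sigma> j)" "target (\<sigma> i) = target (\<sigma> j)"
      using active_coalitions_disjoint_or_equal i(2) I by blast
    then have "coalition (\<sigma> i) \<union> (\<Union>j\<in>I. coalition (\<sigma> j)) = (\<Union>j\<in>I. coalition (\<sigma> j))"
      "target (\<sigma> i) \<inter> (\<Inter>j\<in>I. target (\<sigma> j)) = (\<Inter>j\<in>I. target (\<sigma> j))"
      unfolding j(2,3) using j(1) by blast+
    then show ?thesis
      using IH by simp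
  next
    case False
    then have disjoint: "coalition (\<sigma> i) \<inter> (\<Union>j\<in>I. coalition (\<sigma> j)) = {}"
      by blast
    have "(\<Union>j\<in>I. coalition (\<sigma> j)) \<subseteq> N"
      using I activeD(2) by blast
    then have "can_force (coalition (\<sigma> i) \<union> (\<Union>j\<in>I. coalition (\<sigma> j)))
        (target (\<sigma> i) \<inter> (core \<inter> (\<Inter>j\<in>I. target (\<sigma> j))))"
      using activeD(2,3)[OF i(2)] disjoint IH by (intro can_force_Int)
    then show ?thesis
      by (simp add: Int_left_commute)
  qed
qed

lemma active_players_subset: "active_players \<sigma> \<subseteq> N"
  unfolding active_players_def using activeD(2) by blast

lemma can_force_admissible: "can_force (active_players \<sigma>) (admissible \<sigma>)"
  unfolding active_players_def admissible_def
  using finite_N by (intro can_force_active_union) auto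

lemma admissible_nonempty: "admissible \<sigma> \<noteq> {}"
  using can_force_admissible not_can_force_empty[OF active_players_subset] by metis

lemma outcome_admissible: "outcome \<sigma> \<in> admissible \<sigma>"
  using admissible_nonempty[of \<sigma>] by (auto simp: outcome_def intro: someI_ex)

lemma admissible_subset_core: "admissible \<sigma> \<subseteq> core"
  by (simp add: admissible_def)

lemma active_players_subset_claimants: "active_players \<sigma> \<subseteq> {j\<in>N. coalition (\<sigma> j) \<noteq> {}}"
proof
  fix j
  assume "j \<in> active_players \<sigma>"
  then obtain i where "i \<in> N" "active \<sigma> i" "j \<in> coalition (\<sigma> i)"
    by (auto simp: active_players_def)
  then show "j \<in> {j\<in>N. coalition (\<sigma> j) \<noteq> {}}"
    using activeD(1,2)[of \<sigma> i] activeD(4)[of \<sigma> i j] by auto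
qed

lemma admissible_cong:
  assumes "\<And>i. i \<in> N \<Longrightarrow> coalition (\<sigma> i) = coalition (\<tau> i) \<and> target (\<sigma> i) = target (\<tau> i)"
  shows "admissible \<sigma> = admissible \<tau>"
proof -
  have "active \<sigma> i \<longleftrightarrow> active \<tau> i" if "i \<in> N" for i
  proof -
    have "coalition (\<sigma> i) \<subseteq> N \<Longrightarrow> j \<in> coalition (\<sigma> i) \<Longrightarrow>
        coalition (\<sigma> j) = coalition (\<tau> j) \<and> target (\<sigma> j) = target (\<tau> j)" for j
      using assms by blast
    then show ?thesis
      unfolding active_def using assms[OF that] by auto
  qed
  then have "{i\<in>N. active \<sigma> i} = {i\<in>N. active \<tau> i}"
    by blast
  then show ?thesis
    unfolding admissible_def using assms by (auto simp: INT_iff)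
qed

lemma top_proposal_eqI:
  assumes d: "d \<in> N" and top: "\<And>i. i \<in> N \<Longrightarrow> bid (\<sigma> i) \<le> bid (\<sigma> d)"
    and proposals: "\<And>i. i \<in> N \<Longrightarrow> bid (\<sigma> i) = bid (\<sigma> d) \<Longrightarrow> proposal (\<sigma> i) = t"
  shows "top_proposal \<sigma> = t"
proof -
  have "Max ((\<lambda>i. bid (\<sigma> i)) ` N) = bid (\<sigma> d)"
    using finite_N d top by (intro Max_eqI) auto
  then show ?thesis
    unfolding top_proposal_def using d proposals by (intro some_equality) auto
qed

lemma can_force_imp_guarantee:
  assumes C: "C \<subseteq> N" and "can_force C X"
  shows "\<exists>sC\<in>PiE C (\<lambda>_. UNIV). \<forall>sD\<in>PiE (N - C) (\<lambda>_. UNIV). outcome (combine C sC sD) \<in> X"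
proof
  define sC :: "'p \<Rightarrow> ('p, 's) strategy" where
    "sC = restrict (\<lambda>_. (C, indicator X, undefined, 0)) C"
  show "sC \<in> PiE C (\<lambda>_. UNIV)"
    by (simp add: sC_def)
  show "\<forall>sD\<in>PiE (N - C) (\<lambda>_. UNIV). outcome (combine C sC sD) \<in> X"
  proof
    fix sD
    define \<sigma> where "\<sigma> = combine C sC sD"
    have "admissible \<sigma> \<subseteq> X"
    proof (cases "C = {}")
      case True
      then show ?thesis
        using \<open>can_force C X\<close> admissible_subset_core by (auto simp: can_force_empty_iff)
    next
      case False
      then obtain i where i: "i \<in> C"
        by blast
      have \<sigma>_C: "\<sigma> j = (C, indicator X, undefined, 0)" if "j \<in> C" for j
        using that by (simp add: \<sigma>_def combine_def sC_def)
      have target_X: "{s. indicator X s = (1::real)} = X"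
        by (auto simp: indicator_eq_1_iff)
      have "active \<sigma> i"
        unfolding active_def using \<sigma>_C i C \<open>can_force C X\<close> target_X by simp
      then have "admissible \<sigma> \<subseteq> target (\<sigma> i)"
        using i C by (auto simp: admissible_def)
      then show ?thesis
        using \<sigma>_C[OF i] target_X by simp
    qed
    then show "outcome (combine C sC sD) \<in> X"
      using outcome_admissible[of \<sigma>] by (auto simp: \<sigma>_def)
  qed
qed

text \<open>Conversely, if C guarantees X, let every outsider claim no coalition, propose t and
  outbid C. This does not change the admissible set, whose point t is then the outcome.\<close>

lemma guarantee_imp_can_force:
  assumes C: "C \<subseteq> N"
    and guarantee: "\<forall>sD\<in>PiE (N - C) (\<lambda>_. UNIV). outcome (combine C sC sD) \<in> X"
  shows "can_force C X"
proof (cases "C = N")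
  case True
  then have "outcome (combine C sC (\<lambda>_. undefined)) \<in> X"
    using guarantee by simp
  moreover have "outcome (combine C sC (\<lambda>_. undefined)) \<in> core"
    by (rule subsetD[OF admissible_subset_core outcome_admissible])
  ultimately have "X \<inter> core \<noteq> {}"
    by blast
  then show ?thesis
    unfolding True by (rule can_force_grand_coalition)
next
  case False
  then obtain d where d: "d \<in> N" "d \<notin> C"
    using C by blast
  define b where "b = Suc (Max (insert 0 ((\<lambda>i. bid (sC i)) ` C)))"
  have bid_C: "bid (sC i) < b" if "i \<in> C" for i
    using that finite_subset[OF C finite_N] by (simp add: b_def le_imp_less_Suc)
  define \<sigma> :: "'s \<Rightarrow> 'p \<Rightarrow> ('p, 's) strategy" where
    "\<sigma> t = combine C sC (restrict (\<lambda>_. ({}, \<lambda>_. 0, t, b)) (N - C))" for t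
  have \<sigma>_C: "i \<in> C \<Longrightarrow> \<sigma> t i = sC i" and \<sigma>_outside: "i \<in> N - C \<Longrightarrow> \<sigma> t i = ({}, \<lambda>_. 0, t, b)"
    for t i by (simp_all add: \<sigma>_def combine_def)
  have admissible_eq: "admissible (\<sigma> t) = admissible (\<sigma> undefined)" for t
  proof (rule admissible_cong)
    fix i
    assume "i \<in> N"
    then show "coalition (\<sigma> t i) = coalition (\<sigma> undefined i) \<and> target (\<sigma> t i) = target (\<sigma> undefined i)"
      by (cases "i \<in> C") (simp_all add: \<sigma>_C \<sigma>_outside)
  qed
  have outcome_\<sigma>: "outcome (\<sigma> t) = t" if "t \<in> admissible (\<sigma> undefined)" for t
  proof -
    have "top_proposal (\<sigma> t) = t"
    proof (rule top_proposal_eqI[OF d(1)])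
      fix i
      assume "i \<in> N"
      then show "bid (\<sigma> t i) \<le> bid (\<sigma> t d)"
        using d bid_C by (cases "i \<in> C") (auto simp: \<sigma>_C \<sigma>_outside less_imp_le)
      assume "bid (\<sigma> t i) = bid (\<sigma> t d)"
      then show "proposal (\<sigma> t i) = t"
        using \<open>i \<in> N\<close> d bid_C by (cases "i \<in> C") (auto simp: \<sigma>_C \<sigma>_outside)
    qed
    then show ?thesis
      using that admissible_eq[of t] by (simp add: outcome_def)
  qed
  have "\<sigma> t = combine C sC (restrict (\<lambda>_. ({}, \<lambda>_. 0, t, b)) (N - C))" for t
    by (simp add: \<sigma>_def)
  then have "outcome (\<sigma> t) \<in> X" for t
    using guarantee by simp
  then have "admissible (\<sigma> undefined) \<subseteq> X"
    using outcome_\<sigma> by (metis subsetI)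
  moreover have "active_players (\<sigma> undefined) \<subseteq> C"
  proof
    fix j
    assume "j \<in> active_players (\<sigma> undefined)"
    then have "j \<in> N" "coalition (\<sigma> undefined j) \<noteq> {}"
      using active_players_subset_claimants by blast+
    then show "j \<in> C"
      using \<sigma>_outside[of j undefined] by auto
  qed
  then have "can_force C (admissible (\<sigma> undefined))"
    using C can_force_admissible by (rule can_force_coalition_superset)
  ultimately show ?thesis
    using can_force_superset[OF C] by simp
qed

lemma guarantee_iff_can_force:
  assumes "C \<subseteq> N"
  shows "(\<exists>sC\<in>PiE C (\<lambda>_. UNIV). \<forall>sD\<in>PiE (N - C) (\<lambda>_. UNIV). outcome (combine C sC sD) \<in> X)
      \<longleftrightarrow> can_force C X"
proof
  assume "\<exists>sC\<in>PiE C (\<lambda>_. UNIV). \<forall>sD\<in>PiE (N - C) (\<lambda>_. UNIV). outcome (combine C sC sD) \<in> X"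
  then obtain sC where "\<forall>sD\<in>PiE (N - C) (\<lambda>_. UNIV). outcome (combine C sC sD) \<in> X"
    by blast
  with assms show "can_force C X"
    by (rule guarantee_imp_can_force)
next
  assume "can_force C X"
  with assms show "\<exists>sC\<in>PiE C (\<lambda>_. UNIV). \<forall>sD\<in>PiE (N - C) (\<lambda>_. UNIV). outcome (combine C sC sD) \<in> X"
    by (rule can_force_imp_guarantee)
qed

theorem E_eq_E_G_outcome:
  assumes C: "C \<subseteq> N" and f: "f \<in> Lfun n"
  shows "E C f = E_G N (\<lambda>_. UNIV) outcome C f"
proof -
  have gf: "game_form N (\<lambda>_. UNIV :: ('p, 's) strategy set) outcome"
    by (simp add: game_form_def)
  show ?thesis
  proof (rule Ln_eq_iff_thresholds[OF n E_in_Ln[OF n eff homogeneous C f] E_G_in_Ln[OF gf C f]])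
    fix k
    assume k: "1 \<le> k" "k \<le> n"
    show "real k / real n \<le> E C f \<longleftrightarrow> real k / real n \<le> E_G N (\<lambda>_. UNIV) outcome C f"
      unfolding le_E_iff_can_force[OF C f k] le_E_G_iff[OF gf C f]
        guarantee_iff_can_force[OF C, symmetric] by simp
  qed
qed

end

theorem mainTheorem5:
  fixes n :: nat and N :: "'p set" and E :: "('p, 's) eff"
  assumes "n \<ge> 1" and "finite N" and "card N \<ge> 2" and "\<exists>a b :: 's. a \<noteq> b"
    and "is_eff n N E"
  shows "(truly_playable n N E \<longrightarrow>
            (\<exists>(Sg :: 'p \<Rightarrow> ('p set \<times> ('s \<Rightarrow> real) \<times> 's \<times> nat) set) out.
               game_form N Sg out \<and>
               (\<forall>C f. C \<subseteq> N \<longrightarrow> f \<in> Lfun n \<longrightarrow> E C f = E_G N Sg out C f)))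
       \<and> (\<forall>(Sg :: 'p \<Rightarrow> 'b set) out.
            game_form N Sg out \<longrightarrow>
            (\<forall>C f. C \<subseteq> N \<longrightarrow> f \<in> Lfun n \<longrightarrow> E C f = E_G N Sg out C f) \<longrightarrow>
            truly_playable n N E)"
proof (intro conjI impI allI)
  assume "truly_playable n N E"
  then interpret truly_playable_effectivity n N E
    using assms(1,2,5) by unfold_locales
  have "game_form N (\<lambda>_. UNIV :: ('p, 's) strategy set) outcome"
    by (simp add: game_form_def)
  then show "\<exists>(Sg :: 'p \<Rightarrow> ('p set \<times> ('s \<Rightarrow> real) \<times> 's \<times> nat) set) out.
      game_form N Sg out \<and> (\<forall>C f. C \<subseteq> N \<longrightarrow> f \<in> Lfun n \<longrightarrow> E C f = E_G N Sg out C f)"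
    using E_eq_E_G_outcome by blast
next
  fix Sg :: "'p \<Rightarrow> 'b set" and out
  assume "game_form N Sg out"
    and agree: "\<forall>C f. C \<subseteq> N \<longrightarrow> f \<in> Lfun n \<longrightarrow> E C f = E_G N Sg out C f"
  then have "truly_playable n N (E_G N Sg out)"
    using assms(1) truly_playable_E_G by blast
  then show "truly_playable n N E"
    using truly_playable_cong[OF assms(1)] agree by blast
qed

end
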